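(* Let $\Gamma$ be a gain operator on $\ell^\infty_+(\mathcal I)$ satisfying the $\oplus$-MBI property, and define $\sigma_*:\mathbb R_+\to\ell^\infty_+(\mathcal I)$ by $\sigma_*(r):=\bigoplus_{n=0}^\infty\hat\Gamma^n(r\mathbf 1)$ (the minimal fixed point of $\Gamma^\oplus_{r\mathbf 1}$). Then: (a) if $\sigma_*(r)$ is the only fixed point of $\Gamma^\oplus_{r\mathbf 1}$ for each $r\ge0$, then every component function $\sigma_{*i}$, $i\in\mathcal I$, is continuous; in particular $\sigma_*$ is sequentially continuous in the weak$^*$-topology; (b) if $\sigma_*(r)$ is a globally attractive fixed point of $\Gamma^\oplus_{r\mathbf 1}$ for each $r\ge0$ (i.e. $\|(\Gamma^\oplus_{r\mathbf 1})^n(s)-\sigma_*(r)\|\to0$ for every $s\in\ell^\infty_+(\mathcal I)$), then $\sigma_*$ is norm-continuous.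
   Context: Let $\mathcal I$ be a nonempty countable index set; $\ell^\infty_+(\mathcal I)$ is the cone of nonnegative real families $s=(s_i)_{i\in\mathcal I}$ with $\|s\|:=\sup_i|s_i|<\infty$, ordered componentwise; $\mathbf 1$ is the all-ones vector; $\oplus$ is the componentwise maximum, $\bigoplus$ the componentwise supremum of a bounded family. A sequence in $\ell^\infty(\mathcal I)$ converges weak$^*$ (viewing $\ell^\infty=(\ell^1)^*$) iff it is norm-bounded and converges componentwise. $\mathcal K_\infty$: continuous strictly increasing unbounded $\gamma:\mathbb R_+\to\mathbb R_+$ with $\gamma(0)=0$. For $\mathcal J\subset\mathcal I$, $s_{|\mathcal J}$ agrees with $s$ on $\mathcal J$ and is $0$ elsewhere. Gain operator: for each $i$ a finite (possibly empty) $\mathcal I_i\subset\mathcal I\setminus\{i\}$; directed graph $\mathcal G$ with vertices $\mathcal I$ and edges $ji$, $j\in\mathcal I_i$; a pointwise equicontinuous family $\gamma_{ij}\in\mathcal K_\infty$ ($ji\in E(\mathcal G)$); functions $\mu_i:\ell^\infty_+(\mathcal I)\to[0,\infty]$ with (M1) some $\xi\in\mathcal K_\infty$ has $\mu_i(0)=0$, $\mu_i(s)\ge\xi(\|s\|)$; (M2) $\mu_i$ monotone; (M3) for each finite $\mathcal J$, $\mu_i$ restricted to vectors vanishing off $\mathcal J$ is finite-valued and continuous; (M4) for each norm-bounded $A$ and $\varepsilon>0$ there is $\delta>0$ with $\sup_i|\mu_i(s_{|\mathcal I_i})-\mu_i(s^0_{|\mathcal I_i})|\le\varepsilon$ whenever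 $s^0\in A$, $\|s-s^0\|\le\delta$. $\Gamma_i(s):=\mu_i([\gamma_{ij}(s_j)]_{j\in\mathcal I_i})$ (argument zero outside $\mathcal I_i$). $\hat\Gamma(s):=s\oplus\Gamma(s)$ and $\Gamma^\oplus_b(s):=b\oplus\Gamma(s)$. $\oplus$-MBI property: there is $\varphi\in\mathcal K_\infty$ such that for all $s,b$, $s\le b\oplus\Gamma(s)$ implies $\|s\|\le\varphi(\|b\|)$. *)

theory Defs
  imports Complex_Main "HOL-Library.Countable" "HOL-Library.Extended_Real"
begin

definition linf_pos :: "('i \<Rightarrow> real) set" where
  "linf_pos = {s. (\<forall>i. 0 \<le> s i) \<and> bdd_above (range (\<lambda>i. \<bar>s i\<bar>))}"

definition linf_norm :: "('i \<Rightarrow> real) \<Rightarrow> real" where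
  "linf_norm s = (SUP i. \<bar>s i\<bar>)"

definition restr :: "'i set \<Rightarrow> ('i \<Rightarrow> real) \<Rightarrow> ('i \<Rightarrow> real)" where
  "restr J s = (\<lambda>j. if j \<in> J then s j else 0)"

definition Kinf :: "(real \<Rightarrow> real) \<Rightarrow> bool" where
  "Kinf g \<longleftrightarrow> g 0 = 0 \<and> continuous_on {0..} g \<and> strict_mono_on {0..} g
     \<and> (\<forall>M. \<exists>r\<ge>0. g r > M)"

text \<open>Gain operator component: Gamma_i(s) = mu_i([gamma_ij(s_j)]_{j in I_i}).
  The value of mu is in [0,infinity]; on these finitely supported arguments it is finite
  by (M3), so we take the real part.\<close>
definition Gam :: "('i \<Rightarrow> 'i set) \<Rightarrow> ('i \<Rightarrow> 'i \<Rightarrow> real \<Rightarrow> real) \<Rightarrow> ('i \<Rightarrow> ('i \<Rightarrow> real) \<Rightarrow> ereal)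
    \<Rightarrow> ('i \<Rightarrow> real) \<Rightarrow> ('i \<Rightarrow> real)" where
  "Gam II gam mu s = (\<lambda>i. real_of_ereal (mu i (\<lambda>j. if j \<in> II i then gam i j (s j) else 0)))"

definition gain_operator ::
  "('i \<Rightarrow> 'i set) \<Rightarrow> ('i \<Rightarrow> 'i \<Rightarrow> real \<Rightarrow> real) \<Rightarrow> ('i \<Rightarrow> ('i \<Rightarrow> real) \<Rightarrow> ereal) \<Rightarrow> bool" where
  "gain_operator II gam mu \<longleftrightarrow>
     (\<forall>i. finite (II i) \<and> i \<notin> II i)
   \<and> (\<forall>i j. j \<in> II i \<longrightarrow> Kinf (gam i j))
   \<and> (\<forall>r\<ge>0. \<forall>e>0. \<exists>d>0. \<forall>i j r'. j \<in> II i \<longrightarrow> r' \<ge> 0 \<longrightarrow> \<bar>r' - r\<bar> < d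
          \<longrightarrow> \<bar>gam i j r' - gam i j r\<bar> < e)
   \<comment> \<open>(M1)\<close>
   \<and> (\<exists>xi. Kinf xi \<and> (\<forall>i. mu i (\<lambda>_. 0) = 0 \<and> (\<forall>s\<in>linf_pos. mu i s \<ge> ereal (xi (linf_norm s)))))
   \<comment> \<open>(M2)\<close>
   \<and> (\<forall>i. \<forall>s\<in>linf_pos. \<forall>t\<in>linf_pos. (\<forall>j. s j \<le> t j) \<longrightarrow> mu i s \<le> mu i t)
   \<comment> \<open>(M3)\<close>
   \<and> (\<forall>i J. finite J \<longrightarrow>
        (\<forall>s\<in>linf_pos. (\<forall>j. j \<notin> J \<longrightarrow> s j = 0) \<longrightarrow> mu i s \<noteq> \<infinity>)
      \<and> (\<forall>s\<in>linf_pos. (\<forall>j. j \<notin> J \<longrightarrow> s j = 0) \<longrightarrow> (\<forall>e>0. \<exists>d>0. \<forall>t\<in>linf_pos.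
            (\<forall>j. j \<notin> J \<longrightarrow> t j = 0) \<longrightarrow> linf_norm (\<lambda>j. t j - s j) < d \<longrightarrow>
            \<bar>real_of_ereal (mu i t) - real_of_ereal (mu i s)\<bar> < e)))
   \<comment> \<open>(M4)\<close>
   \<and> (\<forall>A. A \<subseteq> linf_pos \<longrightarrow> (\<exists>C. \<forall>s\<in>A. linf_norm s \<le> C) \<longrightarrow>
        (\<forall>e>0. \<exists>d>0. \<forall>s0\<in>A. \<forall>s\<in>linf_pos. linf_norm (\<lambda>j. s j - s0 j) \<le> d \<longrightarrow>
           (\<forall>i. \<bar>real_of_ereal (mu i (restr (II i) s)) - real_of_ereal (mu i (restr (II i) s0))\<bar> \<le> e)))"

definition Ghat where
  "Ghat II gam mu s = (\<lambda>i. max (s i) (Gam II gam mu s i))"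

definition Gplus where
  "Gplus II gam mu b s = (\<lambda>i. max (b i) (Gam II gam mu s i))"

definition MBI_oplus where
  "MBI_oplus II gam mu \<longleftrightarrow> (\<exists>phi. Kinf phi \<and>
     (\<forall>s\<in>linf_pos. \<forall>b\<in>linf_pos. (\<forall>i. s i \<le> max (b i) (Gam II gam mu s i))
        \<longrightarrow> linf_norm s \<le> phi (linf_norm b)))"

definition sigma_star where
  "sigma_star II gam mu r = (\<lambda>i. SUP n. ((Ghat II gam mu) ^^ n) (\<lambda>_. r) i)"

end

theory Submission
  imports Defs "HOL-Analysis.Analysis"
begin

(*
  Write T r for the operator s |-> r1 (+) Gamma(s). Its iterates from r1 increase to sigma(r)
  and are bounded by phi(r), the MBI gain. Equicontinuity of the gamma_ij together with (M4)
  makes Gamma uniformly continuous, uniformly in the component, on each order interval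
  [0, R1]. Hence sigma(r) is the least fixed point of T r, it is monotone in r, and every
  finite iterate (T r)^N s depends uniformly continuously on r and s. The lower bound
  (T r)^N (r1) <= sigma(r) gives continuity from below. From above: in (a), the decreasing
  limit of sigma(r0 + 1/n) is a fixed point of T r0, hence equals sigma(r0) by uniqueness;
  in (b), sigma(r) <= (T r)^N (sigma(r0 + 1)), and attractivity makes both bounds uniformly
  close to sigma(r0) for large N.
*)

lemma abs_le_linf_norm: "bdd_above (range (\<lambda>i. \<bar>s i\<bar>)) \<Longrightarrow> \<bar>s i\<bar> \<le> linf_norm s"
  unfolding linf_norm_def by (rule cSUP_upper) auto

lemma linf_norm_le: "(\<And>i. \<bar>s i\<bar> \<le> C) \<Longrightarrow> linf_norm s \<le> C"
  unfolding linf_norm_def by (rule cSUP_least) auto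

lemma linf_norm_const: "0 \<le> r \<Longrightarrow> linf_norm (\<lambda>_. r) = r"
  unfolding linf_norm_def by simp

lemma linf_pos_nonneg: "s \<in> linf_pos \<Longrightarrow> 0 \<le> s i"
  by (simp add: linf_pos_def)

lemma linf_pos_le_linf_norm: "s \<in> linf_pos \<Longrightarrow> s i \<le> linf_norm s"
  using abs_le_linf_norm[of s i] by (auto simp: linf_pos_def)

lemma linf_pos_diff_le_linf_norm:
  assumes "s \<in> linf_pos" "t \<in> linf_pos"
  shows "\<bar>s i - t i\<bar> \<le> linf_norm (\<lambda>i. s i - t i)"
proof (rule abs_le_linf_norm)
  obtain A B where "\<And>i. \<bar>s i\<bar> \<le> A" "\<And>i. \<bar>t i\<bar> \<le> B"
    using assms unfolding linf_pos_def bdd_above_def by blast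
  then show "bdd_above (range (\<lambda>i. \<bar>s i - t i\<bar>))"
    by (intro bdd_aboveI[where M="A + B"])
      (force intro: order.trans[OF abs_triangle_ineq4] add_mono)
qed

definition order_box :: "real \<Rightarrow> ('i \<Rightarrow> real) set" where
  "order_box R = {s. \<forall>j. 0 \<le> s j \<and> s j \<le> R}"

lemma order_boxI: "(\<And>j. 0 \<le> s j) \<Longrightarrow> (\<And>j. s j \<le> R) \<Longrightarrow> s \<in> order_box R"
  by (simp add: order_box_def)

lemma order_boxD: "s \<in> order_box R \<Longrightarrow> 0 \<le> s j" "s \<in> order_box R \<Longrightarrow> s j \<le> R"
  by (simp_all add: order_box_def)

lemma order_box_subset_linf_pos: "order_box R \<subseteq> linf_pos"
  by (auto simp: order_box_def linf_pos_def intro!: bdd_aboveI[where M=R])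

lemma order_box_mono: "R \<le> R' \<Longrightarrow> order_box R \<subseteq> order_box R'"
  unfolding order_box_def by (auto intro: order_trans)

lemma const_in_order_box: "0 \<le> c \<Longrightarrow> c \<le> R \<Longrightarrow> (\<lambda>_. c) \<in> order_box R"
  by (simp add: order_box_def)

lemma linf_norm_order_box: "s \<in> order_box R \<Longrightarrow> linf_norm s \<le> R"
  by (rule linf_norm_le) (simp add: order_box_def)

lemma abs_max_diff_le: "\<bar>max a b - max c d\<bar> \<le> max \<bar>a - c\<bar> \<bar>b - (d::real)\<bar>"
  unfolding max_def by auto

lemma Kinf_nonneg: "Kinf g \<Longrightarrow> 0 \<le> x \<Longrightarrow> 0 \<le> g x"
  unfolding Kinf_def by (metis atLeast_iff order.refl order_le_less strict_mono_onD)

lemma Kinf_mono: "Kinf g \<Longrightarrow> 0 \<le> x \<Longrightarrow> x \<le> y \<Longrightarrow> g x \<le> g y"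
  unfolding Kinf_def by (metis atLeast_iff order_le_less strict_mono_onD order_trans)

lemma bounded_by_small_increments:
  fixes f :: "real \<Rightarrow> real"
  assumes f0: "f 0 = 0" and d: "d > 0"
    and step: "\<And>x y. 0 \<le> x \<Longrightarrow> x \<le> y \<Longrightarrow> y \<le> R \<Longrightarrow> y - x \<le> d \<Longrightarrow> \<bar>f y - f x\<bar> \<le> 1"
    and x: "0 \<le> x" "x \<le> R"
  shows "\<bar>f x\<bar> \<le> R / d + 1"
proof -
  have steps: "\<bar>f x\<bar> \<le> real n" if "0 \<le> x" "x \<le> R" "x \<le> real n * d" for n x
    using that
  proof (induction n arbitrary: x)
    case 0
    then have "x = 0" by simp
    then show ?case using f0 by simp
  next
    case (Suc n)
    show ?case
    proof (cases "x \<le> real n * d")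
      case True
      then show ?thesis using Suc by force
    next
      case False
      have "\<bar>f x - f (real n * d)\<bar> \<le> 1"
        using False Suc.prems d by (intro step) (auto simp: algebra_simps)
      moreover have "\<bar>f (real n * d)\<bar> \<le> real n"
        using Suc False d by auto
      ultimately show ?thesis by simp
    qed
  qed
  define n where "n = nat \<lceil>R / d\<rceil>"
  have "0 \<le> R / d" using x d by simp
  then have "R / d \<le> real n" "real n \<le> R / d + 1"
    unfolding n_def by linarith+
  then show ?thesis
    using steps[of x n] x d by (simp add: pos_divide_le_eq)
qed

locale gain_op =
  fixes II :: "'i \<Rightarrow> 'i set" and gam :: "'i \<Rightarrow> 'i \<Rightarrow> real \<Rightarrow> real"
    and mu :: "'i \<Rightarrow> ('i \<Rightarrow> real) \<Rightarrow> ereal"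
  assumes gain: "gain_operator II gam mu"
begin

abbreviation \<Gamma> where "\<Gamma> \<equiv> Gam II gam mu"
abbreviation T where "T r \<equiv> Gplus II gam mu (\<lambda>_. r)"

lemmas gain_conds = gain[unfolded gain_operator_def]

lemma finite_II: "finite (II i)"
  using gain_conds[THEN conjunct1] by blast

lemma gam_Kinf: "j \<in> II i \<Longrightarrow> Kinf (gam i j)"
  using gain_conds[THEN conjunct2, THEN conjunct1] by blast

lemma gam_equicont:
  "0 \<le> r \<Longrightarrow> e > 0 \<Longrightarrow> \<exists>d>0. \<forall>i j r'. j \<in> II i \<longrightarrow> r' \<ge> 0 \<longrightarrow> \<bar>r' - r\<bar> < d
     \<longrightarrow> \<bar>gam i j r' - gam i j r\<bar> < e"
  using gain_conds[THEN conjunct2, THEN conjunct2, THEN conjunct1] by blast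

lemma mu_zero: "mu i (\<lambda>_. 0) = 0"
  using gain_conds[THEN conjunct2, THEN conjunct2, THEN conjunct2, THEN conjunct1] by blast

lemma mu_nonneg: "s \<in> linf_pos \<Longrightarrow> 0 \<le> mu i s"
proof -
  assume s: "s \<in> linf_pos"
  obtain xi where "Kinf xi" "mu i s \<ge> ereal (xi (linf_norm s))"
    using gain_conds[THEN conjunct2, THEN conjunct2, THEN conjunct2, THEN conjunct1] s
    by blast
  moreover have "0 \<le> linf_norm s"
    using linf_pos_nonneg[OF s] linf_pos_le_linf_norm[OF s] order_trans by blast
  ultimately show ?thesis
    using Kinf_nonneg by (meson ereal_less_eq(5) order_trans)
qed

lemma mu_mono:
  "s \<in> linf_pos \<Longrightarrow> t \<in> linf_pos \<Longrightarrow> (\<And>j. s j \<le> t j) \<Longrightarrow> mu i s \<le> mu i t"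
  using gain_conds[THEN conjunct2, THEN conjunct2, THEN conjunct2, THEN conjunct2, THEN conjunct1]
  by blast

lemma mu_finite:
  "finite J \<Longrightarrow> s \<in> linf_pos \<Longrightarrow> (\<And>j. j \<notin> J \<Longrightarrow> s j = 0) \<Longrightarrow> mu i s \<noteq> \<infinity>"
  using gain_conds[THEN conjunct2, THEN conjunct2, THEN conjunct2, THEN conjunct2, THEN conjunct2,
      THEN conjunct1]
  by blast

lemma mu_restr_uniform_cont:
  "A \<subseteq> linf_pos \<Longrightarrow> \<forall>s\<in>A. linf_norm s \<le> C \<Longrightarrow> e > 0 \<Longrightarrow>
    \<exists>d>0. \<forall>s0\<in>A. \<forall>s\<in>linf_pos. linf_norm (\<lambda>j. s j - s0 j) \<le> d \<longrightarrow>
      (\<forall>i. \<bar>real_of_ereal (mu i (restr (II i) s)) - real_of_ereal (mu i (restr (II i) s0))\<bar> \<le> e)"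
  using gain_conds[THEN conjunct2, THEN conjunct2, THEN conjunct2, THEN conjunct2, THEN conjunct2,
      THEN conjunct2]
  by blast

definition gain_arg :: "'i \<Rightarrow> ('i \<Rightarrow> real) \<Rightarrow> 'i \<Rightarrow> real" where
  "gain_arg i s = (\<lambda>j. if j \<in> II i then gam i j (s j) else 0)"

lemma Gam_eq: "\<Gamma> s i = real_of_ereal (mu i (gain_arg i s))"
  by (simp add: Gam_def gain_arg_def)

lemma restr_gain_arg: "restr (II i) (gain_arg i s) = gain_arg i s"
  by (auto simp: restr_def gain_arg_def)

lemma gam_nonneg: "j \<in> II i \<Longrightarrow> 0 \<le> x \<Longrightarrow> 0 \<le> gam i j x"
  using gam_Kinf Kinf_nonneg by blast

lemma gam_uniform_equicont:
  assumes e: "e > 0"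
  shows "\<exists>d>0. \<forall>i j x y. j \<in> II i \<longrightarrow> x \<in> {0..R} \<longrightarrow> y \<in> {0..R} \<longrightarrow> \<bar>x - y\<bar> < d
     \<longrightarrow> \<bar>gam i j x - gam i j y\<bar> < e"
proof -
  have "\<forall>r. \<exists>d. 0 \<le> r \<longrightarrow> d > 0 \<and> (\<forall>i j r'. j \<in> II i \<longrightarrow> r' \<ge> 0 \<longrightarrow> \<bar>r' - r\<bar> < d
          \<longrightarrow> \<bar>gam i j r' - gam i j r\<bar> < e/2)"
    using gam_equicont e by (metis half_gt_zero)
  then obtain D where D: "\<And>r. 0 \<le> r \<Longrightarrow> D r > 0"
    "\<And>r i j r'. 0 \<le> r \<Longrightarrow> j \<in> II i \<Longrightarrow> r' \<ge> 0 \<Longrightarrow> \<bar>r' - r\<bar> < D r \<Longrightarrow> \<bar>gam i j r' - gam i j r\<bar> < e/2"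
    by metis
  have cover: "{0..R} \<subseteq> (\<Union>r\<in>{0..R}. ball r (D r))"
    using D(1) by force
  obtain \<delta> where \<delta>: "0 < \<delta>" "\<And>x. x \<in> {0..R} \<Longrightarrow> \<exists>B \<in> (\<lambda>r. ball r (D r)) ` {0..R}. ball x \<delta> \<subseteq> B"
    using Heine_Borel_lemma[OF compact_Icc cover] by blast
  show ?thesis
  proof (intro exI[of _ \<delta>] conjI allI impI)
    fix i j x y assume h: "j \<in> II i" "x \<in> {0..R}" "y \<in> {0..R}" "\<bar>x - y\<bar> < \<delta>"
    obtain r where r: "r \<in> {0..R}" "ball x \<delta> \<subseteq> ball r (D r)"
      using \<delta>(2)[OF h(2)] by auto
    have "x \<in> ball x \<delta>" "y \<in> ball x \<delta>"
      using \<delta>(1) h(4) by (auto simp: dist_real_def)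
    then have "x \<in> ball r (D r)" "y \<in> ball r (D r)"
      using r(2) by blast+
    then have "\<bar>r - x\<bar> < D r" "\<bar>r - y\<bar> < D r"
      by (simp_all add: dist_real_def)
    then have "\<bar>x - r\<bar> < D r" "\<bar>y - r\<bar> < D r"
      by (simp_all add: abs_minus_commute)
    then have "\<bar>gam i j x - gam i j r\<bar> < e/2" "\<bar>gam i j y - gam i j r\<bar> < e/2"
      using D(2) r(1) h by auto
    then show "\<bar>gam i j x - gam i j y\<bar> < e" by linarith
  qed (fact \<delta>(1))
qed

lemma gam_bounded: "\<exists>B. \<forall>i j x. j \<in> II i \<longrightarrow> x \<in> {0..R} \<longrightarrow> gam i j x \<le> B"
proof -
  obtain d where d: "d > 0" "\<And>i j x y. j \<in> II i \<Longrightarrow> x \<in> {0..R} \<Longrightarrow> y \<in> {0..R} \<Longrightarrow> \<bar>x - y\<bar> < d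
     \<Longrightarrow> \<bar>gam i j x - gam i j y\<bar> < 1"
    using gam_uniform_equicont[of 1 R] by auto
  have "\<bar>gam i j x\<bar> \<le> R / (d/2) + 1" if ij: "j \<in> II i" and x: "x \<in> {0..R}" for i j x
  proof (rule bounded_by_small_increments[where f="gam i j"])
    show "gam i j 0 = 0" using gam_Kinf[OF ij] by (simp add: Kinf_def)
    show "\<bar>gam i j y - gam i j x\<bar> \<le> 1" if "0 \<le> x" "x \<le> y" "y \<le> R" "y - x \<le> d/2" for x y
      using d that ij by (intro less_imp_le d(2)) auto
  qed (use d(1) x in auto)
  then show ?thesis
    by (intro exI[of _ "R / (d/2) + 1"]) (auto dest: abs_le_D1)
qed

lemma gain_arg_linf_pos: "(\<And>j. 0 \<le> s j) \<Longrightarrow> gain_arg i s \<in> linf_pos"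
proof -
  assume s: "\<And>j. 0 \<le> s j"
  have "gain_arg i s \<in> order_box (\<Sum>k\<in>II i. gam i k (s k))"
  proof (rule order_boxI)
    show "0 \<le> gain_arg i s j" for j
      using s gam_nonneg by (simp add: gain_arg_def)
    show "gain_arg i s j \<le> (\<Sum>k\<in>II i. gam i k (s k))" for j
      using s gam_nonneg finite_II by (auto simp: gain_arg_def intro!: member_le_sum sum_nonneg)
  qed
  then show ?thesis using order_box_subset_linf_pos by blast
qed

lemma Gam_nonneg: "(\<And>j. 0 \<le> s j) \<Longrightarrow> 0 \<le> \<Gamma> s i"
  unfolding Gam_eq by (rule real_of_ereal_pos) (use mu_nonneg gain_arg_linf_pos in blast)

lemma Gam_mono:
  assumes s: "\<And>j. 0 \<le> s j" and st: "\<And>j. s j \<le> t j"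
  shows "\<Gamma> s i \<le> \<Gamma> t i"
proof -
  have t: "\<And>j. 0 \<le> t j" using s st order_trans by blast
  have "mu i (gain_arg i s) \<le> mu i (gain_arg i t)"
    using s st by (intro mu_mono gain_arg_linf_pos t)
      (auto simp: gain_arg_def intro: Kinf_mono gam_Kinf)
  moreover have "mu i (gain_arg i t) \<noteq> \<infinity>"
    using t by (intro mu_finite[OF finite_II gain_arg_linf_pos]) (auto simp: gain_arg_def)
  ultimately show ?thesis unfolding Gam_eq
    using real_of_ereal_positive_mono mu_nonneg gain_arg_linf_pos s by blast
qed

lemma Gam_zero: "\<Gamma> (\<lambda>_. 0) i = 0"
proof -
  have "gain_arg i (\<lambda>_. 0) = (\<lambda>_. 0)"
    using gam_Kinf by (auto simp: gain_arg_def Kinf_def)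
  then show ?thesis unfolding Gam_eq by (simp add: mu_zero)
qed

lemma gain_arg_in_order_box: "\<exists>B. \<forall>i. \<forall>s\<in>order_box R. gain_arg i s \<in> order_box B"
proof -
  obtain B where B: "\<And>i j x. j \<in> II i \<Longrightarrow> x \<in> {0..R} \<Longrightarrow> gam i j x \<le> B"
    using gam_bounded[of R] by blast
  have "gain_arg i s \<in> order_box (max B 0)" if s: "s \<in> order_box R" for i s
  proof (rule order_boxI)
    show "0 \<le> gain_arg i s j" for j
      using s gam_nonneg by (simp add: gain_arg_def order_box_def)
    show "gain_arg i s j \<le> max B 0" for j
      using s B[of j i "s j"] by (simp add: gain_arg_def order_box_def le_max_iff_disj)
  qed
  then show ?thesis
    by blast
qed

lemma Gam_uniform_cont:
  assumes e: "e > 0"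
  shows "\<exists>d>0. \<forall>s\<in>order_box R. \<forall>t\<in>order_box R. \<forall>i.
    (\<forall>j\<in>II i. \<bar>s j - t j\<bar> \<le> d) \<longrightarrow> \<bar>\<Gamma> s i - \<Gamma> t i\<bar> \<le> e"
proof -
  obtain B where arg_box: "\<And>i s. s \<in> order_box R \<Longrightarrow> gain_arg i s \<in> order_box B"
    using gain_arg_in_order_box by blast
  have "\<forall>s\<in>order_box B. linf_norm s \<le> B"
    using linf_norm_order_box by blast
  then obtain d2 where d2: "d2 > 0" "\<And>s0 s i. s0 \<in> order_box B \<Longrightarrow> s \<in> linf_pos \<Longrightarrow>
      linf_norm (\<lambda>j. s j - s0 j) \<le> d2 \<Longrightarrow>
      \<bar>real_of_ereal (mu i (restr (II i) s)) - real_of_ereal (mu i (restr (II i) s0))\<bar> \<le> e"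
    using mu_restr_uniform_cont[OF order_box_subset_linf_pos _ e] by blast
  obtain d1 where d1: "d1 > 0" "\<And>i j x y. j \<in> II i \<Longrightarrow> x \<in> {0..R} \<Longrightarrow> y \<in> {0..R} \<Longrightarrow>
      \<bar>x - y\<bar> < d1 \<Longrightarrow> \<bar>gam i j x - gam i j y\<bar> < d2"
    using gam_uniform_equicont[OF d2(1), of R] by blast
  show ?thesis
  proof (intro exI[of _ "d1/2"] conjI ballI allI impI)
    fix s t i assume s: "s \<in> order_box R" and t: "t \<in> order_box R"
      and st: "\<forall>j\<in>II i. \<bar>s j - t j\<bar> \<le> d1/2"
    have "\<bar>gain_arg i s j - gain_arg i t j\<bar> \<le> d2" for j
    proof (cases "j \<in> II i")
      case True
      then have "\<bar>gam i j (s j) - gam i j (t j)\<bar> < d2"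
        using d1 s t st by (intro d1(2)) (auto simp: order_box_def)
      then show ?thesis using True by (simp add: gain_arg_def)
    qed (use d2 in \<open>simp add: gain_arg_def\<close>)
    then have "linf_norm (\<lambda>j. gain_arg i s j - gain_arg i t j) \<le> d2"
      by (rule linf_norm_le)
    then have "\<bar>real_of_ereal (mu i (restr (II i) (gain_arg i s)))
        - real_of_ereal (mu i (restr (II i) (gain_arg i t)))\<bar> \<le> e"
      using d2(2) arg_box[OF t] arg_box[OF s] order_box_subset_linf_pos by blast
    then show "\<bar>\<Gamma> s i - \<Gamma> t i\<bar> \<le> e"
      by (simp add: restr_gain_arg Gam_eq)
  qed (use d1 in simp)
qed

lemma Gam_bounded: "\<exists>B. \<forall>s\<in>order_box R. \<forall>i. \<Gamma> s i \<le> B"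
proof -
  obtain d where d: "d > 0" "\<And>s t i. s \<in> order_box R \<Longrightarrow> t \<in> order_box R \<Longrightarrow>
      (\<forall>j\<in>II i. \<bar>s j - t j\<bar> \<le> d) \<Longrightarrow> \<bar>\<Gamma> s i - \<Gamma> t i\<bar> \<le> 1"
    using Gam_uniform_cont[of 1 R] by auto
  have "\<Gamma> s i \<le> R / d + 1" if s: "s \<in> order_box R" for s i
  proof -
    have R: "0 \<le> R" using order_boxD[OF s, of undefined] by linarith
    have "\<bar>\<Gamma> (\<lambda>_. R) i\<bar> \<le> R / d + 1"
    proof (rule bounded_by_small_increments[where f="\<lambda>x. \<Gamma> (\<lambda>_. x) i"])
      show "\<bar>\<Gamma> (\<lambda>_. y) i - \<Gamma> (\<lambda>_. x) i\<bar> \<le> 1"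
        if "0 \<le> x" "x \<le> y" "y \<le> R" "y - x \<le> d" for x y
        using that by (intro d(2) const_in_order_box) auto
    qed (use Gam_zero d(1) R in auto)
    moreover have "\<Gamma> s i \<le> \<Gamma> (\<lambda>_. R) i"
      using s by (intro Gam_mono) (auto simp: order_box_def)
    ultimately show ?thesis by simp
  qed
  then show ?thesis by blast
qed

lemma Gam_tendsto:
  assumes x: "\<And>n. x n \<in> order_box R" and y: "y \<in> order_box R"
    and lim: "\<And>j. (\<lambda>n. x n j) \<longlonglongrightarrow> y j"
  shows "(\<lambda>n. \<Gamma> (x n) i) \<longlonglongrightarrow> \<Gamma> y i"
proof (rule tendstoI)
  fix e :: real assume e: "e > 0"
  obtain d where d: "d > 0" "\<And>s t i. s \<in> order_box R \<Longrightarrow> t \<in> order_box R \<Longrightarrow>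
      (\<forall>j\<in>II i. \<bar>s j - t j\<bar> \<le> d) \<Longrightarrow> \<bar>\<Gamma> s i - \<Gamma> t i\<bar> \<le> e/2"
    using Gam_uniform_cont[of "e/2" R] e by auto
  have "\<forall>j\<in>II i. eventually (\<lambda>n. dist (x n j) (y j) < d) sequentially"
    using lim d(1) tendstoD by blast
  then have "eventually (\<lambda>n. \<forall>j\<in>II i. dist (x n j) (y j) < d) sequentially"
    by (rule eventually_ball_finite[OF finite_II])
  then show "eventually (\<lambda>n. dist (\<Gamma> (x n) i) (\<Gamma> y i) < e) sequentially"
  proof (rule eventually_mono)
    fix n assume "\<forall>j\<in>II i. dist (x n j) (y j) < d"
    then have "\<bar>\<Gamma> (x n) i - \<Gamma> y i\<bar> \<le> e/2"
      using x y by (intro d(2)) (auto simp: dist_real_def)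
    then show "dist (\<Gamma> (x n) i) (\<Gamma> y i) < e"
      using e by (simp add: dist_real_def)
  qed
qed

lemma Gplus_apply: "T r s i = max r (\<Gamma> s i)"
  by (simp add: Gplus_def)

lemma Gplus_maps_order_box: "\<exists>R'. \<forall>r\<in>{0..\<rho>}. \<forall>s\<in>order_box R. T r s \<in> order_box R'"
proof -
  obtain B where B: "\<forall>s\<in>order_box R. \<forall>i. \<Gamma> s i \<le> B"
    using Gam_bounded by blast
  have "T r s \<in> order_box (max \<rho> B)" if r: "r \<in> {0..\<rho>}" and s: "s \<in> order_box R" for r s
  proof (rule order_boxI)
    fix j
    have "\<Gamma> s j \<le> B"
      using B s by blast
    then show "0 \<le> T r s j" "T r s j \<le> max \<rho> B"
      using r by (auto simp: Gplus_apply le_max_iff_disj)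
  qed
  then show ?thesis by blast
qed

lemma Gplus_iter_maps_order_box:
  "\<exists>R'. \<forall>r\<in>{0..\<rho>}. \<forall>s\<in>order_box R. (T r ^^ N) s \<in> order_box R'"
proof (induction N)
  case 0
  then show ?case by auto
next
  case (Suc N)
  then obtain R' where "\<forall>r\<in>{0..\<rho>}. \<forall>s\<in>order_box R. (T r ^^ N) s \<in> order_box R'"
    by blast
  moreover obtain R'' where "\<forall>r\<in>{0..\<rho>}. \<forall>s\<in>order_box R'. T r s \<in> order_box R''"
    using Gplus_maps_order_box by blast
  ultimately have "\<forall>r\<in>{0..\<rho>}. \<forall>s\<in>order_box R. (T r ^^ Suc N) s \<in> order_box R''"
    by simp
  then show ?case ..
qed

lemma Gplus_iter_nonneg: "(\<And>j. 0 \<le> s j) \<Longrightarrow> 0 \<le> (T r ^^ N) s i"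
  by (induction N arbitrary: i) (auto simp: Gplus_apply intro: max.coboundedI2 Gam_nonneg)

lemma Gplus_iter_mono:
  assumes "\<And>j. 0 \<le> s j" "\<And>j. s j \<le> t j"
  shows "(T r ^^ N) s i \<le> (T r ^^ N) t i"
proof (induction N arbitrary: i)
  case 0
  then show ?case using assms by simp
next
  case (Suc N)
  have "\<Gamma> ((T r ^^ N) s) i \<le> \<Gamma> ((T r ^^ N) t) i"
    by (intro Gam_mono Gplus_iter_nonneg assms(1) Suc.IH)
  then show ?case
    unfolding funpow.simps(2) o_apply Gplus_apply by (rule max.mono[OF order.refl])
qed

lemma Gplus_uniform_cont:
  assumes e: "e > 0"
  shows "\<exists>d>0. \<forall>s\<in>order_box R. \<forall>t\<in>order_box R. \<forall>r r'.
    \<bar>r - r'\<bar> \<le> d \<longrightarrow> (\<forall>j. \<bar>s j - t j\<bar> \<le> d) \<longrightarrow> (\<forall>i. \<bar>T r s i - T r' t i\<bar> \<le> e)"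
proof -
  obtain d where d: "d > 0" "\<And>s t i. s \<in> order_box R \<Longrightarrow> t \<in> order_box R \<Longrightarrow>
      (\<forall>j\<in>II i. \<bar>s j - t j\<bar> \<le> d) \<Longrightarrow> \<bar>\<Gamma> s i - \<Gamma> t i\<bar> \<le> e"
    using Gam_uniform_cont[OF e] by blast
  show ?thesis
  proof (intro exI[of _ "min d e"] conjI ballI allI impI)
    fix s t :: "'i \<Rightarrow> real" and r r' :: real and i
    assume st: "s \<in> order_box R" "t \<in> order_box R"
      and near: "\<bar>r - r'\<bar> \<le> min d e" "\<forall>j. \<bar>s j - t j\<bar> \<le> min d e"
    have "\<bar>\<Gamma> s i - \<Gamma> t i\<bar> \<le> e"
      using d(2) st near(2) by auto
    then show "\<bar>T r s i - T r' t i\<bar> \<le> e"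
      using near(1) abs_max_diff_le[of r "\<Gamma> s i" r' "\<Gamma> t i"] unfolding Gplus_apply by linarith
  qed (use d e in simp)
qed

lemma Gplus_iter_uniform_cont:
  assumes "e > 0"
  shows "\<exists>d>0. \<forall>r\<in>{0..\<rho>}. \<forall>r'\<in>{0..\<rho>}. \<forall>s\<in>order_box R. \<forall>t\<in>order_box R.
    \<bar>r - r'\<bar> \<le> d \<longrightarrow> (\<forall>j. \<bar>s j - t j\<bar> \<le> d) \<longrightarrow> (\<forall>i. \<bar>(T r ^^ N) s i - (T r' ^^ N) t i\<bar> \<le> e)"
  using assms
proof (induction N arbitrary: R)
  case 0
  then show ?case by (intro exI[of _ e]) auto
next
  case (Suc N)
  obtain R' where R': "\<forall>r\<in>{0..\<rho>}. \<forall>s\<in>order_box R. T r s \<in> order_box R'"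
    using Gplus_maps_order_box by blast
  obtain d1 where d1: "d1 > 0" and near1: "\<forall>r\<in>{0..\<rho>}. \<forall>r'\<in>{0..\<rho>}.
      \<forall>s\<in>order_box R'. \<forall>t\<in>order_box R'. \<bar>r - r'\<bar> \<le> d1 \<longrightarrow> (\<forall>j. \<bar>s j - t j\<bar> \<le> d1)
        \<longrightarrow> (\<forall>i. \<bar>(T r ^^ N) s i - (T r' ^^ N) t i\<bar> \<le> e)"
    using Suc.IH[of R', OF Suc.prems] by blast
  obtain d2 where d2: "d2 > 0" and near2: "\<forall>s\<in>order_box R. \<forall>t\<in>order_box R. \<forall>r r'.
      \<bar>r - r'\<bar> \<le> d2 \<longrightarrow> (\<forall>j. \<bar>s j - t j\<bar> \<le> d2) \<longrightarrow> (\<forall>i. \<bar>T r s i - T r' t i\<bar> \<le> d1)"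
    using Gplus_uniform_cont[OF d1] by blast
  show ?case
  proof (intro exI[of _ "min d1 d2"] conjI ballI allI impI)
    fix r r' :: real and s t :: "'i \<Rightarrow> real" and i
    assume r: "r \<in> {0..\<rho>}" "r' \<in> {0..\<rho>}" and st: "s \<in> order_box R" "t \<in> order_box R"
      and near: "\<bar>r - r'\<bar> \<le> min d1 d2" "\<forall>j. \<bar>s j - t j\<bar> \<le> min d1 d2"
    have "\<forall>j. \<bar>T r s j - T r' t j\<bar> \<le> d1"
      using near2 st near by auto
    then have "\<bar>(T r ^^ N) (T r s) i - (T r' ^^ N) (T r' t) i\<bar> \<le> e"
      using R' r st near(1) by (intro near1[rule_format]) auto
    then show "\<bar>(T r ^^ Suc N) s i - (T r' ^^ Suc N) t i\<bar> \<le> e"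
      by (simp only: funpow_Suc_right o_apply)
  qed (use d1 d2 in simp)
qed

lemma Gplus_iter_param_cont:
  assumes r0: "0 \<le> r0" and s: "s \<in> order_box R" and e: "e > 0"
  shows "\<exists>d>0. \<forall>r\<ge>0. \<bar>r - r0\<bar> < d \<longrightarrow> (\<forall>i. \<bar>(T r ^^ N) s i - (T r0 ^^ N) s i\<bar> \<le> e)"
proof -
  obtain d where d: "d > 0" and near: "\<forall>r\<in>{0..r0 + 1}. \<forall>r'\<in>{0..r0 + 1}.
      \<forall>s\<in>order_box R. \<forall>t\<in>order_box R. \<bar>r - r'\<bar> \<le> d \<longrightarrow> (\<forall>j. \<bar>s j - t j\<bar> \<le> d)
        \<longrightarrow> (\<forall>i. \<bar>(T r ^^ N) s i - (T r' ^^ N) t i\<bar> \<le> e)"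
    using Gplus_iter_uniform_cont[OF e] by blast
  show ?thesis
  proof (intro exI[of _ "min d 1"] conjI allI impI)
    fix r i assume "0 \<le> r" "\<bar>r - r0\<bar> < min d 1"
    then show "\<bar>(T r ^^ N) s i - (T r0 ^^ N) s i\<bar> \<le> e"
      using r0 s d by (intro near[rule_format]) auto
  qed (use d in simp)
qed

lemma Gplus_fixpoint_limit:
  assumes x: "\<And>n. x n \<in> order_box R" and y: "y \<in> order_box R"
    and lim: "\<And>j. (\<lambda>n. x n j) \<longlonglongrightarrow> y j" and r_lim: "rs \<longlonglongrightarrow> r"
    and fixed: "\<And>n. T (rs n) (x n) = x n"
  shows "T r y = y"
proof
  fix j
  have "(\<lambda>n. \<Gamma> (x n) j) \<longlonglongrightarrow> \<Gamma> y j"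
    using x y lim by (rule Gam_tendsto)
  then have "(\<lambda>n. T (rs n) (x n) j) \<longlonglongrightarrow> T r y j"
    unfolding Gplus_apply by (intro tendsto_max r_lim)
  then have "(\<lambda>n. x n j) \<longlonglongrightarrow> T r y j"
    by (simp add: fixed)
  then show "T r y j = y j"
    using lim LIMSEQ_unique by blast
qed

end

locale mbi_gain_op = gain_op II gam mu
  for II :: "'i \<Rightarrow> 'i set" and gam and mu +
  assumes mbi: "MBI_oplus II gam mu"
begin

abbreviation \<sigma> where "\<sigma> \<equiv> sigma_star II gam mu"

definition \<phi> :: "real \<Rightarrow> real" where
  "\<phi> = (SOME phi. Kinf phi \<and> (\<forall>s\<in>linf_pos. \<forall>b\<in>linf_pos.
     (\<forall>i. s i \<le> max (b i) (\<Gamma> s i)) \<longrightarrow> linf_norm s \<le> phi (linf_norm b)))"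

lemma \<phi>_Kinf: "Kinf \<phi>"
  and mbi_bound: "s \<in> linf_pos \<Longrightarrow> b \<in> linf_pos \<Longrightarrow> (\<And>i. s i \<le> max (b i) (\<Gamma> s i))
    \<Longrightarrow> linf_norm s \<le> \<phi> (linf_norm b)"
  using someI_ex[OF mbi[unfolded MBI_oplus_def]] unfolding \<phi>_def by blast+

definition sigma_seq :: "real \<Rightarrow> nat \<Rightarrow> 'i \<Rightarrow> real" where
  "sigma_seq r n = (T r ^^ n) (\<lambda>_. r)"

lemma sigma_seq_0: "sigma_seq r 0 = (\<lambda>_. r)"
  by (simp add: sigma_seq_def)

lemma sigma_seq_Suc: "sigma_seq r (Suc n) = T r (sigma_seq r n)"
  by (simp add: sigma_seq_def)

lemma sigma_seq_ge: "r \<le> sigma_seq r n j"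
  by (cases n) (simp_all add: sigma_seq_0 sigma_seq_Suc Gplus_apply)

lemma sigma_seq_incr:
  assumes "0 \<le> r"
  shows "sigma_seq r n j \<le> sigma_seq r (Suc n) j"
proof -
  have "(T r ^^ n) (\<lambda>_. r) j \<le> (T r ^^ n) (T r (\<lambda>_. r)) j"
    using assms by (intro Gplus_iter_mono) (simp_all add: Gplus_apply)
  then show ?thesis
    by (simp only: sigma_seq_def funpow_Suc_right o_apply)
qed

lemma Ghat_iter_eq_sigma_seq:
  assumes r: "0 \<le> r"
  shows "(Ghat II gam mu ^^ n) (\<lambda>_. r) = sigma_seq r n"
proof (induction n)
  case 0
  then show ?case by (simp add: sigma_seq_0)
next
  case (Suc n)
  have "max (sigma_seq r n j) (\<Gamma> (sigma_seq r n) j) = max r (\<Gamma> (sigma_seq r n) j)" for j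
    using sigma_seq_incr[OF r, of n j] sigma_seq_ge[of r n j]
    unfolding sigma_seq_Suc Gplus_apply by linarith
  then show ?case
    using Suc by (simp add: Ghat_def sigma_seq_Suc Gplus_apply)
qed

lemma sigma_seq_in_order_box:
  assumes r: "0 \<le> r"
  shows "sigma_seq r n \<in> order_box (\<phi> r)"
proof -
  obtain R where "\<forall>r'\<in>{0..r}. \<forall>s\<in>order_box r. (T r' ^^ n) s \<in> order_box R"
    using Gplus_iter_maps_order_box by blast
  then have R: "sigma_seq r n \<in> order_box R"
    unfolding sigma_seq_def using r const_in_order_box[OF r order.refl] by auto
  have "linf_norm (sigma_seq r n) \<le> \<phi> (linf_norm (\<lambda>_::'i. r))"
  proof (rule mbi_bound)
    show "sigma_seq r n \<in> linf_pos"
      using R order_box_subset_linf_pos by blast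
    show "(\<lambda>_::'i. r) \<in> linf_pos"
      using r const_in_order_box order_box_subset_linf_pos by blast
    show "sigma_seq r n i \<le> max r (\<Gamma> (sigma_seq r n) i)" for i
      using sigma_seq_incr[OF r, of n i] by (simp add: sigma_seq_Suc Gplus_apply)
  qed
  then have norm_le: "linf_norm (sigma_seq r n) \<le> \<phi> r"
    using r by (simp add: linf_norm_const)
  show ?thesis
  proof (rule order_boxI)
    fix j
    show "0 \<le> sigma_seq r n j"
      using R by (rule order_boxD)
    have "sigma_seq r n j \<le> linf_norm (sigma_seq r n)"
      by (rule linf_pos_le_linf_norm) (use R order_box_subset_linf_pos in blast)
    then show "sigma_seq r n j \<le> \<phi> r"
      using norm_le by linarith
  qed
qed

lemma sigma_star_eq_SUP: "0 \<le> r \<Longrightarrow> \<sigma> r j = (SUP n. sigma_seq r n j)"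
  by (simp add: sigma_star_def Ghat_iter_eq_sigma_seq)

lemma bdd_above_sigma_seq: "0 \<le> r \<Longrightarrow> bdd_above (range (\<lambda>n. sigma_seq r n j))"
  by (intro bdd_aboveI[where M="\<phi> r"]) (auto intro: order_boxD(2)[OF sigma_seq_in_order_box])

lemma sigma_seq_tendsto:
  assumes r: "0 \<le> r"
  shows "(\<lambda>n. sigma_seq r n j) \<longlonglongrightarrow> \<sigma> r j"
  unfolding sigma_star_eq_SUP[OF r]
  by (rule LIMSEQ_incseq_SUP[OF bdd_above_sigma_seq[OF r]]) (intro incseq_SucI sigma_seq_incr[OF r])

lemma sigma_seq_le_sigma_star:
  assumes r: "0 \<le> r"
  shows "sigma_seq r n j \<le> \<sigma> r j"
  unfolding sigma_star_eq_SUP[OF r] by (rule cSUP_upper[OF _ bdd_above_sigma_seq[OF r]]) simp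

lemma sigma_star_in_order_box:
  assumes r: "0 \<le> r"
  shows "\<sigma> r \<in> order_box (\<phi> r)"
proof (rule order_boxI)
  fix j
  show "0 \<le> \<sigma> r j"
    using r sigma_seq_ge[of r 0 j] sigma_seq_le_sigma_star[OF r, of 0 j] by linarith
  show "\<sigma> r j \<le> \<phi> r"
    unfolding sigma_star_eq_SUP[OF r]
    by (rule cSUP_least) (auto intro: order_boxD(2)[OF sigma_seq_in_order_box[OF r]])
qed

lemma sigma_star_fixpoint:
  assumes r: "0 \<le> r"
  shows "T r (\<sigma> r) = \<sigma> r"
proof
  fix j
  have "(\<lambda>n. \<Gamma> (sigma_seq r n) j) \<longlonglongrightarrow> \<Gamma> (\<sigma> r) j"
    using sigma_seq_in_order_box[OF r] sigma_star_in_order_box[OF r] sigma_seq_tendsto[OF r]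
    by (rule Gam_tendsto)
  then have "(\<lambda>n. sigma_seq r (Suc n) j) \<longlonglongrightarrow> T r (\<sigma> r) j"
    unfolding sigma_seq_Suc Gplus_apply by (intro tendsto_max tendsto_const)
  moreover have "(\<lambda>n. sigma_seq r (Suc n) j) \<longlonglongrightarrow> \<sigma> r j"
    using sigma_seq_tendsto[OF r] by (rule LIMSEQ_Suc)
  ultimately show "T r (\<sigma> r) j = \<sigma> r j"
    by (rule LIMSEQ_unique)
qed

lemma sigma_star_least:
  assumes r: "0 \<le> r" and s: "\<And>j. 0 \<le> s j" and super: "\<And>j. T r s j \<le> s j"
  shows "\<sigma> r j \<le> s j"
proof -
  have "sigma_seq r n j \<le> s j" for n j
  proof (induction n arbitrary: j)
    case 0
    then show ?case
      using super[of j] by (simp add: sigma_seq_0 Gplus_apply)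
  next
    case (Suc n)
    have "\<Gamma> (sigma_seq r n) j \<le> \<Gamma> s j"
      using Suc r sigma_seq_ge order_trans by (intro Gam_mono) blast+
    then show ?case
      using super[of j] unfolding sigma_seq_Suc Gplus_apply by linarith
  qed
  then show ?thesis
    unfolding sigma_star_eq_SUP[OF r] by (intro cSUP_least) auto
qed

lemma sigma_star_mono:
  assumes "0 \<le> r" "r \<le> r'"
  shows "\<sigma> r j \<le> \<sigma> r' j"
proof (rule sigma_star_least[OF assms(1)])
  have r': "0 \<le> r'"
    using assms by simp
  show "0 \<le> \<sigma> r' j" for j
    using sigma_star_in_order_box[OF r'] by (rule order_boxD)
  show "T r (\<sigma> r') j \<le> \<sigma> r' j" for j
    using fun_cong[OF sigma_star_fixpoint[OF r'], of j] assms(2)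
    unfolding Gplus_apply by linarith
qed

lemma sigma_star_iter: "0 \<le> r \<Longrightarrow> (T r ^^ N) (\<sigma> r) = \<sigma> r"
  by (induction N) (simp_all add: sigma_star_fixpoint)

lemma sigma_star_le_iter:
  assumes "0 \<le> r" "r \<le> \<rho>"
  shows "\<sigma> r i \<le> (T r ^^ N) (\<sigma> \<rho>) i"
proof -
  have "(T r ^^ N) (\<sigma> r) i \<le> (T r ^^ N) (\<sigma> \<rho>) i"
    by (intro Gplus_iter_mono order_boxD(1)[OF sigma_star_in_order_box[OF assms(1)]]
        sigma_star_mono[OF assms])
  then show ?thesis
    by (simp add: sigma_star_iter assms(1))
qed

lemma sigma_seq_uniform_cont:
  assumes r0: "0 \<le> r0" and e: "e > 0"
  shows "\<exists>d>0. \<forall>r\<ge>0. \<bar>r - r0\<bar> < d \<longrightarrow> (\<forall>i. \<bar>sigma_seq r N i - sigma_seq r0 N i\<bar> \<le> e)"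
proof -
  obtain d where d: "d > 0" and near: "\<forall>r\<in>{0..r0 + 1}. \<forall>r'\<in>{0..r0 + 1}.
      \<forall>s\<in>order_box (r0 + 1). \<forall>t\<in>order_box (r0 + 1). \<bar>r - r'\<bar> \<le> d \<longrightarrow> (\<forall>j. \<bar>s j - t j\<bar> \<le> d)
        \<longrightarrow> (\<forall>i. \<bar>(T r ^^ N) s i - (T r' ^^ N) t i\<bar> \<le> e)"
    using Gplus_iter_uniform_cont[OF e] by blast
  show ?thesis
  proof (intro exI[of _ "min d 1"] conjI allI impI)
    fix r i assume r: "0 \<le> r" "\<bar>r - r0\<bar> < min d 1"
    then show "\<bar>sigma_seq r N i - sigma_seq r0 N i\<bar> \<le> e"
      unfolding sigma_seq_def using r0 by (intro near[rule_format] const_in_order_box) auto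
  qed (use d in simp)
qed

lemma sigma_star_right_tendsto:
  assumes unique: "\<And>r s. 0 \<le> r \<Longrightarrow> s \<in> linf_pos \<Longrightarrow> T r s = s \<Longrightarrow> s = \<sigma> r"
    and r0: "0 \<le> r0"
  shows "(\<lambda>n. \<sigma> (r0 + inverse (Suc n)) i) \<longlonglongrightarrow> \<sigma> r0 i"
proof -
  define rn where "rn n = r0 + inverse (Suc n)" for n :: nat
  define y where "y j = (INF n. \<sigma> (rn n) j)" for j
  have rn: "0 \<le> rn n" "r0 \<le> rn n" "rn n \<le> r0 + 1" "rn (Suc n) \<le> rn n" for n
    using r0 by (auto simp: rn_def field_simps)
  have rn_lim: "rn \<longlonglongrightarrow> r0"
    unfolding rn_def using tendsto_add[OF tendsto_const LIMSEQ_inverse_real_of_nat, of r0] by simp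
  have box: "\<sigma> (rn n) \<in> order_box (\<phi> (r0 + 1))" for n
    using sigma_star_in_order_box[OF rn(1)] order_box_mono[OF Kinf_mono[OF \<phi>_Kinf rn(1) rn(3)]]
    by blast
  have lim: "(\<lambda>n. \<sigma> (rn n) j) \<longlonglongrightarrow> y j" for j
    unfolding y_def
  proof (rule LIMSEQ_decseq_INF)
    show "bdd_below (range (\<lambda>n. \<sigma> (rn n) j))"
      using sigma_star_mono[OF r0 rn(2)] by (intro bdd_belowI[where m="\<sigma> r0 j"]) auto
    show "decseq (\<lambda>n. \<sigma> (rn n) j)"
      using sigma_star_mono[OF rn(1) rn(4)] by (intro decseq_SucI)
  qed
  have y_box: "y \<in> order_box (\<phi> (r0 + 1))"
  proof (rule order_boxI)
    show "0 \<le> y j" for j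
      by (rule LIMSEQ_le_const[OF lim]) (use order_boxD(1)[OF box] in blast)
    show "y j \<le> \<phi> (r0 + 1)" for j
      by (rule LIMSEQ_le_const2[OF lim]) (use order_boxD(2)[OF box] in blast)
  qed
  have "T r0 y = y"
    using box y_box lim rn_lim sigma_star_fixpoint[OF rn(1)] by (rule Gplus_fixpoint_limit)
  then have "y = \<sigma> r0"
    using unique[OF r0] y_box order_box_subset_linf_pos by blast
  then show ?thesis
    using lim[of i] by (simp add: rn_def)
qed

lemma sigma_star_component_cont:
  assumes unique: "\<And>r s. 0 \<le> r \<Longrightarrow> s \<in> linf_pos \<Longrightarrow> T r s = s \<Longrightarrow> s = \<sigma> r"
    and r0: "0 \<le> r0" and e: "e > 0"
  shows "\<exists>d>0. \<forall>r\<ge>0. \<bar>r - r0\<bar> < d \<longrightarrow> \<bar>\<sigma> r i - \<sigma> r0 i\<bar> \<le> e"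
proof -
  obtain N where N: "\<bar>sigma_seq r0 N i - \<sigma> r0 i\<bar> < e/2"
    using LIMSEQ_D[OF sigma_seq_tendsto[OF r0] half_gt_zero[OF e]]
    by (metis order_refl real_norm_def)
  obtain d where d: "d > 0" "\<forall>r\<ge>0. \<bar>r - r0\<bar> < d \<longrightarrow> (\<forall>i. \<bar>sigma_seq r N i - sigma_seq r0 N i\<bar> \<le> e/2)"
    using sigma_seq_uniform_cont[OF r0 half_gt_zero[OF e]] by blast
  obtain M where M: "\<bar>\<sigma> (r0 + inverse (Suc M)) i - \<sigma> r0 i\<bar> < e"
    using LIMSEQ_D[OF sigma_star_right_tendsto[OF unique r0] e] by (metis order_refl real_norm_def)
  show ?thesis
  proof (intro exI[of _ "min d (inverse (Suc M))"] conjI allI impI)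
    fix r assume r: "0 \<le> r" "\<bar>r - r0\<bar> < min d (inverse (Suc M))"
    have "sigma_seq r N i \<le> \<sigma> r i"
      using r(1) by (rule sigma_seq_le_sigma_star)
    moreover have "\<bar>sigma_seq r N i - sigma_seq r0 N i\<bar> \<le> e/2"
      using d(2) r by auto
    moreover have "\<sigma> r i \<le> \<sigma> (r0 + inverse (Suc M)) i"
      using r by (intro sigma_star_mono) auto
    ultimately show "\<bar>\<sigma> r i - \<sigma> r0 i\<bar> \<le> e"
      using N M by linarith
  qed (use d in simp)
qed

lemma continuous_on_sigma_star_component:
  assumes unique: "\<And>r s. 0 \<le> r \<Longrightarrow> s \<in> linf_pos \<Longrightarrow> T r s = s \<Longrightarrow> s = \<sigma> r"
  shows "continuous_on {0..} (\<lambda>r. \<sigma> r i)"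
  unfolding continuous_on_iff
proof (intro ballI allI impI)
  fix r0 e :: real assume "r0 \<in> {0..}" and e: "0 < e"
  then have r0: "0 \<le> r0"
    by simp
  obtain d where d: "d > 0" "\<forall>r\<ge>0. \<bar>r - r0\<bar> < d \<longrightarrow> \<bar>\<sigma> r i - \<sigma> r0 i\<bar> \<le> e/2"
    using sigma_star_component_cont[OF unique r0 half_gt_zero[OF e]] by blast
  show "\<exists>d>0. \<forall>r\<in>{0..}. dist r r0 < d \<longrightarrow> dist (\<sigma> r i) (\<sigma> r0 i) < e"
  proof (intro exI[of _ d] conjI ballI impI)
    fix r assume "r \<in> {0..}" "dist r r0 < d"
    then have "\<bar>\<sigma> r i - \<sigma> r0 i\<bar> \<le> e/2"
      using d(2) by (simp add: dist_real_def)
    then show "dist (\<sigma> r i) (\<sigma> r0 i) < e"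
      using e by (simp add: dist_real_def)
  qed (fact d(1))
qed

lemma sigma_star_weak_star_tendsto:
  assumes unique: "\<And>r s. 0 \<le> r \<Longrightarrow> s \<in> linf_pos \<Longrightarrow> T r s = s \<Longrightarrow> s = \<sigma> r"
    and rs: "\<And>n. 0 \<le> rs n" and r: "0 \<le> r" and lim: "rs \<longlonglongrightarrow> r"
  shows "(\<exists>C. \<forall>n. linf_norm (\<sigma> (rs n)) \<le> C) \<and> (\<forall>i. (\<lambda>n. \<sigma> (rs n) i) \<longlonglongrightarrow> \<sigma> r i)"
proof
  obtain K where K: "\<And>n. norm (rs n) \<le> K"
    using convergent_imp_Bseq[OF convergentI[OF lim]] BseqE by metis
  have "linf_norm (\<sigma> (rs n)) \<le> \<phi> K" for n
  proof -
    have "\<phi> (rs n) \<le> \<phi> K"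
      using K[of n] rs[of n] by (intro Kinf_mono[OF \<phi>_Kinf]) auto
    then show ?thesis
      using linf_norm_order_box[OF sigma_star_in_order_box[OF rs[of n]]] by linarith
  qed
  then show "\<exists>C. \<forall>n. linf_norm (\<sigma> (rs n)) \<le> C"
    by blast
  show "\<forall>i. (\<lambda>n. \<sigma> (rs n) i) \<longlonglongrightarrow> \<sigma> r i"
  proof
    fix i
    show "(\<lambda>n. \<sigma> (rs n) i) \<longlonglongrightarrow> \<sigma> r i"
      by (rule continuous_on_tendsto_compose[OF continuous_on_sigma_star_component[OF unique] lim])
        (use r rs in \<open>simp_all add: always_eventually\<close>)
  qed
qed

lemma attractive_eventually_close:
  assumes attractive: "\<And>r s. 0 \<le> r \<Longrightarrow> s \<in> linf_pos \<Longrightarrow>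
      (\<lambda>n. linf_norm (\<lambda>i. (T r ^^ n) s i - \<sigma> r i)) \<longlonglongrightarrow> 0"
    and r: "0 \<le> r" and s: "s \<in> order_box R" and e: "e > 0"
  shows "eventually (\<lambda>n. \<forall>i. \<bar>(T r ^^ n) s i - \<sigma> r i\<bar> < e) sequentially"
  using tendstoD[OF attractive[OF r] e] s order_box_subset_linf_pos
proof -
  have "eventually (\<lambda>n. dist (linf_norm (\<lambda>i. (T r ^^ n) s i - \<sigma> r i)) 0 < e) sequentially"
    using s order_box_subset_linf_pos by (intro tendstoD[OF attractive[OF r] e]) blast
  then show ?thesis
  proof (rule eventually_mono)
    fix n assume "dist (linf_norm (\<lambda>i. (T r ^^ n) s i - \<sigma> r i)) 0 < e"
    then have norm_less: "linf_norm (\<lambda>i. (T r ^^ n) s i - \<sigma> r i) < e"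
      by (simp add: dist_real_def)
    obtain R' where "\<forall>r'\<in>{0..r}. \<forall>s\<in>order_box R. (T r' ^^ n) s \<in> order_box R'"
      using Gplus_iter_maps_order_box by blast
    then have "(T r ^^ n) s \<in> order_box R'"
      using r s by auto
    then have "\<bar>(T r ^^ n) s i - \<sigma> r i\<bar> \<le> linf_norm (\<lambda>i. (T r ^^ n) s i - \<sigma> r i)" for i
      using order_box_subset_linf_pos sigma_star_in_order_box[OF r]
      by (intro linf_pos_diff_le_linf_norm) blast+
    then show "\<forall>i. \<bar>(T r ^^ n) s i - \<sigma> r i\<bar> < e"
      using norm_less order_le_less_trans by blast
  qed
qed

lemma sigma_star_norm_cont:
  assumes attractive: "\<And>r s. 0 \<le> r \<Longrightarrow> s \<in> linf_pos \<Longrightarrow>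
      (\<lambda>n. linf_norm (\<lambda>i. (T r ^^ n) s i - \<sigma> r i)) \<longlonglongrightarrow> 0"
    and r0: "0 \<le> r0" and e: "e > 0"
  shows "\<exists>d>0. \<forall>r\<ge>0. \<bar>r - r0\<bar> < d \<longrightarrow> linf_norm (\<lambda>i. \<sigma> r i - \<sigma> r0 i) < e"
proof -
  define \<rho> where "\<rho> = r0 + 1"
  have \<rho>: "0 \<le> \<rho>" using r0 by (simp add: \<rho>_def)
  have e4: "e/4 > 0" using e by simp
  obtain N where
    below: "\<forall>i. \<bar>sigma_seq r0 N i - \<sigma> r0 i\<bar> < e/4" and
    above: "\<forall>i. \<bar>(T r0 ^^ N) (\<sigma> \<rho>) i - \<sigma> r0 i\<bar> < e/4"
    using eventually_conj[OF
        attractive_eventually_close[OF attractive r0 const_in_order_box[OF r0 order.refl] e4]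
        attractive_eventually_close[OF attractive r0 sigma_star_in_order_box[OF \<rho>] e4]]
    unfolding eventually_sequentially sigma_seq_def by blast
  obtain d1 where d1: "d1 > 0"
    "\<forall>r\<ge>0. \<bar>r - r0\<bar> < d1 \<longrightarrow> (\<forall>i. \<bar>sigma_seq r N i - sigma_seq r0 N i\<bar> \<le> e/4)"
    using sigma_seq_uniform_cont[OF r0 e4] by blast
  obtain d2 where d2: "d2 > 0"
    "\<forall>r\<ge>0. \<bar>r - r0\<bar> < d2 \<longrightarrow> (\<forall>i. \<bar>(T r ^^ N) (\<sigma> \<rho>) i - (T r0 ^^ N) (\<sigma> \<rho>) i\<bar> \<le> e/4)"
    using Gplus_iter_param_cont[OF r0 sigma_star_in_order_box[OF \<rho>] e4] by blast
  show ?thesis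
  proof (intro exI[of _ "min 1 (min d1 d2)"] conjI allI impI)
    fix r assume r: "0 \<le> r" "\<bar>r - r0\<bar> < min 1 (min d1 d2)"
    then have r_le: "r \<le> \<rho>"
      unfolding \<rho>_def by linarith
    have "\<bar>\<sigma> r i - \<sigma> r0 i\<bar> \<le> e/2" for i
    proof -
      have "sigma_seq r N i \<le> \<sigma> r i"
        using r(1) by (rule sigma_seq_le_sigma_star)
      moreover have "\<sigma> r i \<le> (T r ^^ N) (\<sigma> \<rho>) i"
        using r(1) r_le by (rule sigma_star_le_iter)
      moreover have "\<bar>sigma_seq r N i - sigma_seq r0 N i\<bar> \<le> e/4"
        using d1(2) r by auto
      moreover have "\<bar>(T r ^^ N) (\<sigma> \<rho>) i - (T r0 ^^ N) (\<sigma> \<rho>) i\<bar> \<le> e/4"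
        using d2(2) r by auto
      ultimately show ?thesis
        using below[rule_format, of i] above[rule_format, of i] by linarith
    qed
    then have "linf_norm (\<lambda>i. \<sigma> r i - \<sigma> r0 i) \<le> e/2"
      by (rule linf_norm_le)
    then show "linf_norm (\<lambda>i. \<sigma> r i - \<sigma> r0 i) < e"
      using e by linarith
  qed (use d1 d2 in simp)
qed

end

theorem proposition3p10:
  fixes II :: "'i::countable \<Rightarrow> 'i set"
    and gam :: "'i \<Rightarrow> 'i \<Rightarrow> real \<Rightarrow> real"
    and mu :: "'i \<Rightarrow> ('i \<Rightarrow> real) \<Rightarrow> ereal"
  assumes "gain_operator II gam mu"
    and "MBI_oplus II gam mu"
  shows "((\<forall>r\<ge>0. \<forall>s\<in>linf_pos. s = Gplus II gam mu (\<lambda>_. r) s \<longrightarrow> s = sigma_star II gam mu r)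
          \<longrightarrow> (\<forall>i. continuous_on {0..} (\<lambda>r. sigma_star II gam mu r i))
            \<and> (\<forall>rs r. (\<forall>n. rs n \<ge> 0) \<longrightarrow> r \<ge> 0 \<longrightarrow> rs \<longlonglongrightarrow> r \<longrightarrow>
                 (\<exists>C. \<forall>n. linf_norm (sigma_star II gam mu (rs n)) \<le> C)
               \<and> (\<forall>i. (\<lambda>n. sigma_star II gam mu (rs n) i) \<longlonglongrightarrow> sigma_star II gam mu r i)))
       \<and> ((\<forall>r\<ge>0. \<forall>s\<in>linf_pos.
             (\<lambda>n. linf_norm (\<lambda>i. ((Gplus II gam mu (\<lambda>_. r)) ^^ n) s i - sigma_star II gam mu r i))
               \<longlonglongrightarrow> 0)
          \<longrightarrow> (\<forall>r0\<ge>0. \<forall>e>0. \<exists>d>0. \<forall>r\<ge>0. \<bar>r - r0\<bar> < d \<longrightarrow>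
                 linf_norm (\<lambda>i. sigma_star II gam mu r i - sigma_star II gam mu r0 i) < e))"
proof -
  interpret mbi_gain_op II gam mu
    using assms by unfold_locales
  show ?thesis
  proof (intro conjI impI)
    assume "\<forall>r\<ge>0. \<forall>s\<in>linf_pos. s = T r s \<longrightarrow> s = \<sigma> r"
    then have unique: "\<And>r s. 0 \<le> r \<Longrightarrow> s \<in> linf_pos \<Longrightarrow> T r s = s \<Longrightarrow> s = \<sigma> r"
      by metis
    show "\<forall>i. continuous_on {0..} (\<lambda>r. \<sigma> r i)"
      using continuous_on_sigma_star_component[OF unique] by blast
    show "\<forall>rs r. (\<forall>n. rs n \<ge> 0) \<longrightarrow> r \<ge> 0 \<longrightarrow> rs \<longlonglongrightarrow> r \<longrightarrow>
        (\<exists>C. \<forall>n. linf_norm (\<sigma> (rs n)) \<le> C) \<and> (\<forall>i. (\<lambda>n. \<sigma> (rs n) i) \<longlonglongrightarrow> \<sigma> r i)"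
      using sigma_star_weak_star_tendsto[OF unique] by blast
  next
    assume "\<forall>r\<ge>0. \<forall>s\<in>linf_pos. (\<lambda>n. linf_norm (\<lambda>i. (T r ^^ n) s i - \<sigma> r i)) \<longlonglongrightarrow> 0"
    then show "\<forall>r0\<ge>0. \<forall>e>0. \<exists>d>0. \<forall>r\<ge>0. \<bar>r - r0\<bar> < d \<longrightarrow> linf_norm (\<lambda>i. \<sigma> r i - \<sigma> r0 i) < e"
      using sigma_star_norm_cont by blast
  qed
qed

end
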